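(* Consider the sequences $(x_k),(y_k),(\nu_k),(\lambda_k)$ generated by Algorithm 2 (described in the context). Then: (a) for all $k\ge1$, $\ \frac{\lambda_kL}{2}\big\|\lambda_k(F(y_{k-1})+\nu_{k-1})+y_{k-1}-x_{k-1}\big\|\le\theta$; (b) for all $k\ge1$, $\ \frac{\lambda_kL}{2}\big\|\lambda_k(F(y_k)+\nu_k)+y_k-x_{k-1}\big\|\le\hat\theta$.
   Context: Setting: $\mathcal H$ real Hilbert space; $C\subseteq\mathcal H$ nonempty closed convex; $N_C(x)=\{\nu:\langle\nu,y-x\rangle\le0\ \forall y\in C\}$ if $x\in C$, $N_C(x)=\emptyset$ otherwise. $F:C\to\mathcal H$ is monotone, continuously differentiable, and $\|F'(x)-F'(y)\|\le L\|x-y\|$ for all $x,y\in C$, with $L>0$; the set of $x$ with $0\in F(x)+N_C(x)$ is nonempty. For $y\in C$, $F_y(x):=F(y)+F'(y)(x-y)$. Parameters: $0\le\hat\sigma<1/2$; $0<\theta<(1-\hat\sigma)(1-2\hat\sigma)$; $\hat\theta:=\theta\big(\frac{\hat\sigma}{1-\hat\sigma}+\frac{\theta}{(1-\hat\sigma)^2}\big)$; $\eta>2\hat\theta/L$; $\tau:=\dfrac{2(\theta-\hat\theta)}{2\theta+\frac{\eta L}{2}+\sqrt{(2\theta+\frac{\eta L}{2})^2-4\theta(\theta-\hat\theta)}}$. Algorithm 2: input $x_0\in C$, $y_0:=x_0$, $\nu_0:=0$, $\lambda_1>0$ with $\lambda_1^2\|F(y_0)\|\le2\theta/L$. For $k=1,2,\dots$: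 if $F(y_{k-1})+\nu_{k-1}=0$, stop and return $y_{k-1}$. If $\frac{\lambda_kL}{2}\|\lambda_k(F(y_{k-1})+\nu_{k-1})+y_{k-1}-x_{k-1}\|\le\hat\theta$, set $y_k=y_{k-1}$, $\nu_k=\nu_{k-1}$; otherwise find any $(y_k,\nu_k)$ with $\nu_k\in N_C(y_k)$ and $\|\lambda_k(F_{y_{k-1}}(y_k)+\nu_k)+y_k-x_{k-1}\|\le\hat\sigma\|y_k-y_{k-1}\|$. Then, if $\lambda_k\|y_k-x_{k-1}\|\ge\eta$, set $x_k=x_{k-1}-\tau\lambda_k(F(y_k)+\nu_k)$ and $\lambda_{k+1}=(1-\tau)\lambda_k$; else set $x_k=x_{k-1}$ and $\lambda_{k+1}=\lambda_k/(1-\tau)$. Standing assumption: the algorithm never stops at the first test, i.e. $F(y_{k-1})+\nu_{k-1}\neq0$ for all $k$. *)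

theory Defs
  imports "HOL-Analysis.Analysis"
begin

definition normal_cone :: "'a::real_inner set \<Rightarrow> 'a \<Rightarrow> 'a set" where
  "normal_cone C x = (if x \<in> C then {v. \<forall>y\<in>C. inner v (y - x) \<le> 0} else {})"

definition linearization :: "('a::real_vector \<Rightarrow> 'a) \<Rightarrow> ('a \<Rightarrow> 'a \<Rightarrow> 'a) \<Rightarrow> 'a \<Rightarrow> 'a \<Rightarrow> 'a" where
  "linearization F F' y x = F y + F' y (x - y)"

definition thetahat :: "real \<Rightarrow> real \<Rightarrow> real" where
  "thetahat \<sigma> \<theta> = \<theta> * (\<sigma> / (1 - \<sigma>) + \<theta> / (1 - \<sigma>)\<^sup>2)"

definition tau_param :: "real \<Rightarrow> real \<Rightarrow> real \<Rightarrow> real \<Rightarrow> real" where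
  "tau_param \<sigma> \<theta> \<eta> L =
     (let th = thetahat \<sigma> \<theta>; b = 2 * \<theta> + \<eta> * L / 2 in
      2 * (\<theta> - th) / (b + sqrt (b\<^sup>2 - 4 * \<theta> * (\<theta> - th))))"

text \<open>The sequences (x_k), (y_k), (nu_k), (lambda_k) are generated by Algorithm 2
  (with the standing assumption that the algorithm never stops).\<close>
definition algorithm2 ::
  "'a::real_inner set \<Rightarrow> ('a \<Rightarrow> 'a) \<Rightarrow> ('a \<Rightarrow> 'a \<Rightarrow> 'a) \<Rightarrow> real \<Rightarrow> real \<Rightarrow> real \<Rightarrow> real \<Rightarrow>
   (nat \<Rightarrow> 'a) \<Rightarrow> (nat \<Rightarrow> 'a) \<Rightarrow> (nat \<Rightarrow> 'a) \<Rightarrow> (nat \<Rightarrow> real) \<Rightarrow> bool" where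
  "algorithm2 C F F' L \<sigma> \<theta> \<eta> x y \<nu> lam \<longleftrightarrow>
     (let th = thetahat \<sigma> \<theta>; \<tau> = tau_param \<sigma> \<theta> \<eta> L in
      x 0 \<in> C \<and> y 0 = x 0 \<and> \<nu> 0 = 0 \<and> lam 1 > 0 \<and>
      (lam 1)\<^sup>2 * norm (F (y 0)) \<le> 2 * \<theta> / L \<and>
      (\<forall>k\<ge>1.
         F (y (k - 1)) + \<nu> (k - 1) \<noteq> 0 \<and>
         (if lam k * L / 2 * norm (lam k *\<^sub>R (F (y (k - 1)) + \<nu> (k - 1)) + y (k - 1) - x (k - 1)) \<le> th
          then y k = y (k - 1) \<and> \<nu> k = \<nu> (k - 1)
          else \<nu> k \<in> normal_cone C (y k) \<and>
               norm (lam k *\<^sub>R (linearization F F' (y (k - 1)) (y k) + \<nu> k) + y k - x (k - 1))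
                 \<le> \<sigma> * norm (y k - y (k - 1))) \<and>
         (if lam k * norm (y k - x (k - 1)) \<ge> \<eta>
          then x k = x (k - 1) - (\<tau> * lam k) *\<^sub>R (F (y k) + \<nu> k) \<and> lam (k + 1) = (1 - \<tau>) * lam k
          else x k = x (k - 1) \<and> lam (k + 1) = lam k / (1 - \<tau>))))"

end

theory Submission
  imports Defs
begin

text \<open>
  Both bounds are proved together by induction on k, each one feeding the other.

  (a) at step k gives (b) at step k. If the test keeps y_k = y_{k-1}, (b) is the test itself.
  Otherwise, with d = norm (y_k - y_{k-1}), monotonicity of F'(y_{k-1}) (inherited from F) and
  of the normal cone give (1 - sigma) d <= norm (lambda_k (F(y_{k-1}) + nu_{k-1}) + y_{k-1} - x_{k-1}),
  while the Lipschitz remainder bound norm (F(y_k) - F_{y_{k-1}}(y_k)) <= L d^2 / 2 controls the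
  passage from the linearization back to F. With t = lambda_k L d / 2 this yields
  (1 - sigma) t <= theta and the quantity in (b) is at most sigma t + t^2 <= theta-hat.

  (b) at step k gives (a) at step k + 1. An extragradient step leaves the vector unchanged and
  shrinks lambda by the factor 1 - tau. A stepsize increase lambda_{k+1} = lambda_k / (1 - tau)
  costs the factor (1 - tau)^(-2) and an extra term below tau eta L / 2, and tau is chosen as a
  root of theta (1 - tau)^2 = theta-hat + tau eta L / 2.
\<close>

lemma convex_segment_point_mem:
  assumes "convex C" "u \<in> C" "v \<in> C" "t \<in> {0..1}"
  shows "u + t *\<^sub>R (v - u) \<in> C"
  using convexD_alt[OF assms(1-3), of t] assms(4) by (simp add: algebra_simps)

lemma lipschitz_derivative_remainder_bound:
  fixes F :: "'a::real_normed_vector \<Rightarrow> 'b::real_normed_vector"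
  assumes C: "convex C" and u: "u \<in> C" and v: "v \<in> C"
    and deriv: "\<And>w. w \<in> C \<Longrightarrow> (F has_derivative F' w) (at w within C)"
    and lip: "\<And>w z. w \<in> C \<Longrightarrow> z \<in> C \<Longrightarrow> onorm (\<lambda>h. F' w h - F' z h) \<le> L * norm (w - z)"
  shows "norm (F v - F u - F' u (v - u)) \<le> L / 2 * (norm (v - u))\<^sup>2"
proof -
  define h where "h = v - u"
  define p where "p t = u + t *\<^sub>R h" for t :: real
  have p_mem: "p t \<in> C" if "t \<in> {0..1}" for t
    using convex_segment_point_mem[OF C u v that] by (simp add: p_def h_def)
  have linear: "bounded_linear (F' w)" if "w \<in> C" for w
    using deriv[OF that] by (rule has_derivative_bounded_linear)
  define g where "g t = F (p t) - t *\<^sub>R F' u h" for t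
  have g_deriv: "(g has_vector_derivative F' (p t) h - F' u h) (at t within {0..1})"
    if t: "t \<in> {0..1}" for t
  proof -
    have "(p has_derivative (\<lambda>s. s *\<^sub>R h)) (at t within {0..1})"
      unfolding p_def by (auto intro!: derivative_eq_intros)
    then have "((\<lambda>t. F (p t)) has_derivative (\<lambda>s. F' (p t) (s *\<^sub>R h))) (at t within {0..1})"
      using deriv p_mem by (intro has_derivative_in_compose2[where t=C and g=F and g'=F', OF _ _ t]) auto
    then have "((\<lambda>t. F (p t)) has_derivative (\<lambda>s. s *\<^sub>R F' (p t) h)) (at t within {0..1})"
      by (simp add: linear_cmul[OF bounded_linear.linear[OF linear[OF p_mem[OF t]]]])
    then show ?thesis unfolding g_def has_vector_derivative_def
      by (auto intro!: derivative_eq_intros simp: algebra_simps)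
  qed
  have "norm (g 1 - g 0) \<le> L * (norm h)\<^sup>2 * 1\<^sup>2 / 2 - L * (norm h)\<^sup>2 * 0\<^sup>2 / 2"
  proof (rule differentiable_bound_general[where \<phi>' = "\<lambda>t. L * (norm h)\<^sup>2 * t"])
    show "continuous_on {0..1} g"
      using g_deriv continuous_on_eq_continuous_within has_vector_derivative_continuous by blast
    show "(g has_vector_derivative F' (p t) h - F' u h) (at t)" if "0 < t" "t < 1" for t
      using g_deriv[of t] that by (simp add: at_within_Icc_at)
    show "((\<lambda>t. L * (norm h)\<^sup>2 * t\<^sup>2 / 2) has_vector_derivative L * (norm h)\<^sup>2 * t) (at t)" for t
      by (auto intro!: derivative_eq_intros simp: has_real_derivative_iff_has_vector_derivative[symmetric])
    show "norm (F' (p t) h - F' u h) \<le> L * (norm h)\<^sup>2 * t" if "0 < t" "t < 1" for t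
    proof -
      have t: "t \<in> {0..1}" using that by simp
      have "norm (F' (p t) h - F' u h) \<le> onorm (\<lambda>k. F' (p t) k - F' u k) * norm h"
        by (rule onorm) (intro bounded_linear_sub linear p_mem t u)
      also have "\<dots> \<le> L * norm (p t - u) * norm h"
        by (intro mult_right_mono lip p_mem t u) simp
      also have "norm (p t - u) = t * norm h" using t by (simp add: p_def)
      finally show ?thesis by (simp add: power2_eq_square algebra_simps)
    qed
  qed (auto intro!: continuous_intros)
  moreover have "g 1 - g 0 = F v - F u - F' u (v - u)"
    by (simp add: g_def p_def h_def)
  ultimately show ?thesis by (simp add: h_def)
qed

lemma monotone_derivative_inner_nonneg:
  fixes F :: "'a::real_inner \<Rightarrow> 'a"
  assumes C: "convex C" and u: "u \<in> C" and v: "v \<in> C"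
    and deriv: "(F has_derivative F') (at u within C)"
    and mono: "\<And>w z. w \<in> C \<Longrightarrow> z \<in> C \<Longrightarrow> 0 \<le> inner (F w - F z) (w - z)"
  shows "0 \<le> inner (F' (v - u)) (v - u)"
proof -
  define h where "h = v - u"
  define p where "p t = u + t *\<^sub>R h" for t :: real
  define \<phi> where "\<phi> t = inner (F (p t)) h" for t
  have p_mem: "p t \<in> C" if "t \<in> {0..1}" for t
    using convex_segment_point_mem[OF C u v that] by (simp add: p_def h_def)
  have "(p has_derivative (\<lambda>s. s *\<^sub>R h)) (at 0 within {0..1})"
    unfolding p_def by (auto intro!: derivative_eq_intros)
  moreover have "(F has_derivative F') (at (p 0) within p ` {0..1})"
    using p_mem by (auto simp: p_def[of 0] intro!: has_derivative_subset[OF deriv])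
  ultimately have "(F \<circ> p has_derivative F' \<circ> (\<lambda>s. s *\<^sub>R h)) (at 0 within {0..1})"
    by (rule diff_chain_within)
  then have "(\<phi> has_derivative (\<lambda>s. inner (F' (s *\<^sub>R h)) h)) (at 0 within {0..1})"
    unfolding \<phi>_def o_def by (rule bounded_linear.has_derivative[OF bounded_linear_inner_left])
  moreover have "linear F'" using deriv by (rule has_derivative_linear)
  ultimately have "(\<phi> has_field_derivative inner (F' h) h) (at 0 within {0..1})"
    unfolding has_real_derivative_iff_has_vector_derivative has_vector_derivative_def
    by (simp add: linear_cmul)
  then have "((\<lambda>t. (\<phi> t - \<phi> 0) / (t - 0)) \<longlongrightarrow> inner (F' h) h) (at 0 within {0..1})"
    by (simp add: has_field_derivative_iff)
  moreover have "\<forall>\<^sub>F t in at 0 within {0..1}. 0 \<le> (\<phi> t - \<phi> 0) / (t - 0)"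
    unfolding eventually_at_filter
  proof (intro always_eventually allI impI)
    fix t :: real assume "t \<noteq> 0" "t \<in> {0..1}"
    then have t: "t \<in> {0<..1}" by simp
    have "0 \<le> inner (F (p t) - F (p 0)) (p t - p 0)"
      using t by (intro mono p_mem) auto
    also have "\<dots> = t * (\<phi> t - \<phi> 0)"
      by (simp add: \<phi>_def p_def inner_diff_left)
    finally show "0 \<le> (\<phi> t - \<phi> 0) / (t - 0)"
      using t by (simp add: zero_le_mult_iff)
  qed
  ultimately show ?thesis
    by (auto intro: tendsto_lowerbound simp: at_within_Icc_at_right h_def)
qed

lemma normal_cone_nonempty_imp_mem: "w \<in> normal_cone C z \<Longrightarrow> z \<in> C"
  by (auto simp: normal_cone_def split: if_splits)

lemma normal_cone_monotone:
  assumes "a \<in> normal_cone C y" "b \<in> normal_cone C z"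
  shows "0 \<le> inner (a - b) (y - z)"
proof -
  have "inner a (z - y) \<le> 0" "inner b (y - z) \<le> 0"
    using assms normal_cone_nonempty_imp_mem[OF assms(1)] normal_cone_nonempty_imp_mem[OF assms(2)]
    by (auto simp: normal_cone_def)
  then show ?thesis
    by (simp add: inner_diff_left inner_diff_right inner_commute)
qed

lemma inexact_step_displacement_bound:
  fixes F :: "'a::real_inner \<Rightarrow> 'a"
  assumes psd: "0 \<le> inner (F' y (z - y)) (z - y)" and l: "0 \<le> l"
    and w: "w \<in> normal_cone C y" and wz: "wz \<in> normal_cone C z"
    and inexact: "norm (l *\<^sub>R (linearization F F' y z + wz) + z - x) \<le> \<sigma> * norm (z - y)"
  shows "(1 - \<sigma>) * norm (z - y) \<le> norm (l *\<^sub>R (F y + w) + y - x)"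
proof -
  define a where "a = l *\<^sub>R (F y + w) + y - x"
  define e where "e = l *\<^sub>R (linearization F F' y z + wz) + z - x"
  define r where "r = e - a"
  define d where "d = norm (z - y)"
  have "inner r (z - y) = l * inner (F' y (z - y)) (z - y) + l * inner (wz - w) (z - y) + d\<^sup>2"
    by (simp add: r_def e_def a_def d_def linearization_def algebra_simps inner_add_left inner_diff_left
        power2_norm_eq_inner)
  also have "\<dots> \<ge> d\<^sup>2"
    using psd normal_cone_monotone[OF wz w] l by simp
  finally have "d\<^sup>2 \<le> norm r * d"
    using norm_cauchy_schwarz[of r "z - y"] by (simp add: d_def)
  also have "norm r \<le> \<sigma> * d + norm a"
    using inexact norm_triangle_ineq4[of e a] by (simp add: r_def e_def d_def)
  finally have "d * d \<le> (\<sigma> * d + norm a) * d"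
    by (simp add: d_def power2_eq_square mult_right_mono)
  then have "d \<le> \<sigma> * d + norm a"
    by (cases "d = 0") (auto simp: d_def)
  then show ?thesis by (simp add: a_def d_def algebra_simps)
qed

lemma stepsize_increase_residual_bound:
  fixes v w :: "'a::real_normed_vector"
  assumes \<tau>: "0 \<le> \<tau>" "\<tau> < 1" and l: "0 \<le> l" and L: "0 \<le> L"
  shows "l / (1 - \<tau>) * L / 2 * norm ((l / (1 - \<tau>)) *\<^sub>R v + w)
    \<le> (l * L / 2 * norm (l *\<^sub>R v + w) + \<tau> * L / 2 * (l * norm w)) / (1 - \<tau>)\<^sup>2"
proof -
  define c where "c = 1 - \<tau>"
  have c: "0 < c" using \<tau> by (simp add: c_def)
  have "(1 / c) *\<^sub>R (l *\<^sub>R v + w) - (\<tau> / c) *\<^sub>R w = (l / c) *\<^sub>R v + ((1 - \<tau>) / c) *\<^sub>R w"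
    by (simp add: algebra_simps diff_divide_distrib)
  then have "(l / c) *\<^sub>R v + w = (1 / c) *\<^sub>R (l *\<^sub>R v + w) - (\<tau> / c) *\<^sub>R w"
    using c by (simp add: c_def)
  then have "norm ((l / c) *\<^sub>R v + w) \<le> (norm (l *\<^sub>R v + w) + \<tau> * norm w) / c"
    using norm_triangle_ineq4[of "(1 / c) *\<^sub>R (l *\<^sub>R v + w)" "(\<tau> / c) *\<^sub>R w"] c \<tau>
    by (simp add: add_divide_distrib)
  then have "l / c * L / 2 * norm ((l / c) *\<^sub>R v + w) \<le> l / c * L / 2 * ((norm (l *\<^sub>R v + w) + \<tau> * norm w) / c)"
    using c l L by (intro mult_left_mono) auto
  also have "\<dots> = (l * L / 2 * norm (l *\<^sub>R v + w) + \<tau> * L / 2 * (l * norm w)) / c\<^sup>2"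
    by (simp add: power2_eq_square field_simps)
  finally show ?thesis by (simp add: c_def)
qed

text \<open>The smaller root of a r^2 - b r + c, in the cancellation-free form used by tau_param.\<close>

lemma smaller_quadratic_root:
  fixes a b c :: real
  assumes c: "0 < c" "c \<le> a" and b: "2 * a < b"
  defines "r \<equiv> 2 * c / (b + sqrt (b\<^sup>2 - 4 * a * c))"
  shows "0 < r" and "r < 1" and "a * r\<^sup>2 - b * r + c = 0"
proof -
  define s where "s = sqrt (b\<^sup>2 - 4 * a * c)"
  have "4 * a * c \<le> (2 * a)\<^sup>2"
    using c mult_left_mono[of c a "4 * a"] by (simp add: power2_eq_square)
  also have "\<dots> < b\<^sup>2"
    using c b by (intro power_strict_mono) auto
  finally have "4 * a * c < b\<^sup>2" .
  then have s: "0 < s" "s\<^sup>2 = b\<^sup>2 - 4 * a * c" by (simp_all add: s_def)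
  have bs: "0 < b + s" using c b s by simp
  show "0 < r" using c bs by (simp add: r_def s_def[symmetric])
  show "r < 1" using c b s bs by (simp add: r_def s_def[symmetric])
  have r: "r * (b + s) = 2 * c" using bs by (simp add: r_def s_def[symmetric])
  have "(a * r\<^sup>2 - b * r + c) * (b + s)\<^sup>2
      = a * (r * (b + s))\<^sup>2 - b * (r * (b + s)) * (b + s) + c * (b + s)\<^sup>2"
    by (simp add: power2_eq_square algebra_simps)
  also have "\<dots> = a * (2 * c)\<^sup>2 - b * (2 * c) * (b + s) + c * (b + s)\<^sup>2"
    by (simp only: r)
  also have "\<dots> = c * (4 * a * c - b\<^sup>2 + s\<^sup>2)"
    by (simp add: power2_eq_square algebra_simps)
  finally show "a * r\<^sup>2 - b * r + c = 0" using s bs by simp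
qed

lemma thetahat_nonneg: "0 \<le> \<sigma> \<Longrightarrow> \<sigma> < 1 \<Longrightarrow> 0 \<le> \<theta> \<Longrightarrow> 0 \<le> thetahat \<sigma> \<theta>"
  by (simp add: thetahat_def)

lemma thetahat_less:
  assumes "0 \<le> \<sigma>" "\<sigma> < 1/2" "0 < \<theta>" "\<theta> < (1 - \<sigma>) * (1 - 2 * \<sigma>)"
  shows "thetahat \<sigma> \<theta> < \<theta>"
proof -
  have "\<theta> / (1 - \<sigma>)\<^sup>2 < (1 - \<sigma>) * (1 - 2 * \<sigma>) / (1 - \<sigma>)\<^sup>2"
    using assms by (intro divide_strict_right_mono) auto
  also have "\<dots> = (1 - 2 * \<sigma>) / (1 - \<sigma>)"
    using assms by (simp add: power2_eq_square)
  finally have "\<sigma> / (1 - \<sigma>) + \<theta> / (1 - \<sigma>)\<^sup>2 < \<sigma> / (1 - \<sigma>) + (1 - 2 * \<sigma>) / (1 - \<sigma>)"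
    by simp
  also have "\<dots> = 1" using assms by (simp add: field_simps)
  finally have "\<sigma> / (1 - \<sigma>) + \<theta> / (1 - \<sigma>)\<^sup>2 < 1" .
  then show ?thesis
    using assms by (simp add: thetahat_def)
qed

lemma thetahat_ge:
  assumes "0 \<le> \<sigma>" "\<sigma> < 1" "0 \<le> t" "(1 - \<sigma>) * t \<le> \<theta>"
  shows "\<sigma> * t + t\<^sup>2 \<le> thetahat \<sigma> \<theta>"
proof -
  have "t \<le> \<theta> / (1 - \<sigma>)" using assms by (simp add: field_simps)
  then have "\<sigma> * t + t\<^sup>2 \<le> \<sigma> * (\<theta> / (1 - \<sigma>)) + (\<theta> / (1 - \<sigma>))\<^sup>2"
    using assms by (intro add_mono mult_left_mono power_mono) auto
  also have "\<dots> = thetahat \<sigma> \<theta>" by (simp add: thetahat_def power2_eq_square algebra_simps)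
  finally show ?thesis .
qed

lemma
  assumes "0 \<le> thetahat \<sigma> \<theta>" "thetahat \<sigma> \<theta> < \<theta>" "0 < \<eta>" "0 < L"
  shows tau_param_pos: "0 < tau_param \<sigma> \<theta> \<eta> L"
    and tau_param_less_1: "tau_param \<sigma> \<theta> \<eta> L < 1"
    and thetahat_tau_param: "thetahat \<sigma> \<theta> + tau_param \<sigma> \<theta> \<eta> L * \<eta> * L / 2 = \<theta> * (1 - tau_param \<sigma> \<theta> \<eta> L)\<^sup>2"
proof -
  have root: "0 < tau_param \<sigma> \<theta> \<eta> L \<and> tau_param \<sigma> \<theta> \<eta> L < 1 \<and>
      \<theta> * (tau_param \<sigma> \<theta> \<eta> L)\<^sup>2 - (2 * \<theta> + \<eta> * L / 2) * tau_param \<sigma> \<theta> \<eta> L + (\<theta> - thetahat \<sigma> \<theta>) = 0"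
    using smaller_quadratic_root[of "\<theta> - thetahat \<sigma> \<theta>" \<theta> "2 * \<theta> + \<eta> * L / 2"] assms
    by (simp add: tau_param_def Let_def)
  then show "0 < tau_param \<sigma> \<theta> \<eta> L" "tau_param \<sigma> \<theta> \<eta> L < 1" by auto
  from root show "thetahat \<sigma> \<theta> + tau_param \<sigma> \<theta> \<eta> L * \<eta> * L / 2 = \<theta> * (1 - tau_param \<sigma> \<theta> \<eta> L)\<^sup>2"
    by (simp add: power2_eq_square algebra_simps)
qed

locale algorithm2_run =
  fixes C :: "'a::real_inner set" and F :: "'a \<Rightarrow> 'a" and F' :: "'a \<Rightarrow> 'a \<Rightarrow> 'a"
    and L \<sigma> \<theta> \<eta> :: real and x y \<nu> :: "nat \<Rightarrow> 'a" and lam :: "nat \<Rightarrow> real"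
  assumes convex: "convex C"
    and monotone: "\<And>u v. u \<in> C \<Longrightarrow> v \<in> C \<Longrightarrow> 0 \<le> inner (F u - F v) (u - v)"
    and deriv: "\<And>u. u \<in> C \<Longrightarrow> (F has_derivative F' u) (at u within C)"
    and lipschitz: "\<And>u v. u \<in> C \<Longrightarrow> v \<in> C \<Longrightarrow> onorm (\<lambda>h. F' u h - F' v h) \<le> L * norm (u - v)"
    and L_pos: "0 < L"
    and \<sigma>_ge: "0 \<le> \<sigma>" and \<sigma>_less: "\<sigma> < 1/2"
    and \<theta>_pos: "0 < \<theta>" and \<theta>_less: "\<theta> < (1 - \<sigma>) * (1 - 2 * \<sigma>)"
    and \<eta>_greater: "2 * thetahat \<sigma> \<theta> / L < \<eta>"
    and run: "algorithm2 C F F' L \<sigma> \<theta> \<eta> x y \<nu> lam"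
begin

abbreviation "\<tau> \<equiv> tau_param \<sigma> \<theta> \<eta> L"

text \<open>Bound (a) reads residual (lam k) (y (k - 1)) (\<nu> (k - 1)) (x (k - 1)) \<le> \<theta>,
  bound (b) reads residual (lam k) (y k) (\<nu> k) (x (k - 1)) \<le> thetahat \<sigma> \<theta>.\<close>

definition residual :: "real \<Rightarrow> 'a \<Rightarrow> 'a \<Rightarrow> 'a \<Rightarrow> real" where
  "residual l z w x0 = l * L / 2 * norm (l *\<^sub>R (F z + w) + z - x0)"

lemma thetahat_bounds: "0 \<le> thetahat \<sigma> \<theta>" "thetahat \<sigma> \<theta> < \<theta>"
  using thetahat_nonneg thetahat_less \<sigma>_ge \<sigma>_less \<theta>_pos \<theta>_less by auto

lemma \<tau>_bounds: "0 < \<tau>" "\<tau> < 1" and thetahat_\<tau>: "thetahat \<sigma> \<theta> + \<tau> * \<eta> * L / 2 = \<theta> * (1 - \<tau>)\<^sup>2"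
proof -
  have "0 \<le> 2 * thetahat \<sigma> \<theta> / L"
    using thetahat_bounds L_pos by simp
  then have "0 < \<eta>"
    using \<eta>_greater by linarith
  then show "0 < \<tau>" "\<tau> < 1" "thetahat \<sigma> \<theta> + \<tau> * \<eta> * L / 2 = \<theta> * (1 - \<tau>)\<^sup>2"
    using tau_param_pos tau_param_less_1 thetahat_tau_param thetahat_bounds L_pos by auto
qed

lemma initial:
  "x 0 \<in> C" "y 0 = x 0" "\<nu> 0 = 0" "0 < lam 1" "(lam 1)\<^sup>2 * norm (F (y 0)) \<le> 2 * \<theta> / L"
  using run by (auto simp: algorithm2_def Let_def)

lemma update:
  "(if residual (lam (Suc n)) (y n) (\<nu> n) (x n) \<le> thetahat \<sigma> \<theta>
    then y (Suc n) = y n \<and> \<nu> (Suc n) = \<nu> n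
    else \<nu> (Suc n) \<in> normal_cone C (y (Suc n)) \<and>
      norm (lam (Suc n) *\<^sub>R (linearization F F' (y n) (y (Suc n)) + \<nu> (Suc n)) + y (Suc n) - x n)
        \<le> \<sigma> * norm (y (Suc n) - y n)) \<and>
   (if \<eta> \<le> lam (Suc n) * norm (y (Suc n) - x n)
    then x (Suc n) = x n - (\<tau> * lam (Suc n)) *\<^sub>R (F (y (Suc n)) + \<nu> (Suc n)) \<and>
      lam (Suc (Suc n)) = (1 - \<tau>) * lam (Suc n)
    else x (Suc n) = x n \<and> lam (Suc (Suc n)) = lam (Suc n) / (1 - \<tau>))"
proof -
  have "1 \<le> Suc n" by simp
  with run show ?thesis
    unfolding algorithm2_def Let_def residual_def
    by (elim conjE allE[where x = "Suc n"]) (simp only: diff_Suc_1 Suc_eq_plus1[symmetric] simp_thms; blast)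
qed

lemma lam_pos: "0 < lam (Suc n)"
proof (induction n)
  case 0
  show ?case using initial by simp
next
  case (Suc n)
  then show ?case using update[of n] \<tau>_bounds by (auto split: if_splits)
qed

lemma normal_cone_mem: "\<nu> n \<in> normal_cone C (y n)"
proof (induction n)
  case 0
  show ?case using initial by (simp add: normal_cone_def)
next
  case (Suc n)
  then show ?case using update[of n] by (auto split: if_splits)
qed

lemma residual_extrapolation:
  "residual ((1 - \<tau>) * l) z w (x0 - (\<tau> * l) *\<^sub>R (F z + w)) = (1 - \<tau>) * residual l z w x0"
proof -
  have shift: "((1 - \<tau>) * l) *\<^sub>R (F z + w) + z - (x0 - (\<tau> * l) *\<^sub>R (F z + w))
      = l *\<^sub>R (F z + w) + z - x0"
    by (simp add: algebra_simps)
  show ?thesis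
    unfolding residual_def shift by simp
qed

lemma residual_stepsize_increase:
  assumes l: "0 \<le> l" and small: "l * norm (z - x0) < \<eta>" and res: "residual l z w x0 \<le> thetahat \<sigma> \<theta>"
  shows "residual (l / (1 - \<tau>)) z w x0 \<le> \<theta>"
proof -
  have "residual (l / (1 - \<tau>)) z w x0
      \<le> (residual l z w x0 + \<tau> * L / 2 * (l * norm (z - x0))) / (1 - \<tau>)\<^sup>2"
    using stepsize_increase_residual_bound[of \<tau> l L "F z + w" "z - x0"] \<tau>_bounds l L_pos
    by (simp add: residual_def add_diff_eq)
  also have "\<dots> \<le> (thetahat \<sigma> \<theta> + \<tau> * \<eta> * L / 2) / (1 - \<tau>)\<^sup>2"
    using res small \<tau>_bounds L_pos by (intro divide_right_mono add_mono) (auto simp: mult_left_mono)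
  also have "\<dots> = \<theta>"
    using thetahat_\<tau> \<tau>_bounds by simp
  finally show ?thesis .
qed

lemma residual_inexact_step:
  assumes l: "0 < l" and w: "w \<in> normal_cone C u" and w': "w' \<in> normal_cone C v"
    and inexact: "norm (l *\<^sub>R (linearization F F' u v + w') + v - x0) \<le> \<sigma> * norm (v - u)"
    and res: "residual l u w x0 \<le> \<theta>"
  shows "residual l v w' x0 \<le> thetahat \<sigma> \<theta>"
proof -
  have u: "u \<in> C" and v: "v \<in> C"
    using w w' by (auto intro: normal_cone_nonempty_imp_mem)
  define d where "d = norm (v - u)"
  define M where "M = l * L / 2"
  have M: "0 < M" using l L_pos by (simp add: M_def)
  have "0 \<le> inner (F' u (v - u)) (v - u)"
    using convex u v deriv[OF u] monotone by (rule monotone_derivative_inner_nonneg)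
  then have "(1 - \<sigma>) * d \<le> norm (l *\<^sub>R (F u + w) + u - x0)"
    unfolding d_def using l w w' inexact by (intro inexact_step_displacement_bound) auto
  then have "(1 - \<sigma>) * (M * d) \<le> residual l u w x0"
    using M by (simp add: residual_def M_def[symmetric] mult.left_commute)
  then have displacement: "(1 - \<sigma>) * (M * d) \<le> \<theta>"
    using res by linarith
  have "l *\<^sub>R (F v + w') + v - x0
      = (l *\<^sub>R (linearization F F' u v + w') + v - x0) + l *\<^sub>R (F v - F u - F' u (v - u))"
    by (simp add: linearization_def algebra_simps)
  then have "norm (l *\<^sub>R (F v + w') + v - x0)
      \<le> norm (l *\<^sub>R (linearization F F' u v + w') + v - x0) + l * norm (F v - F u - F' u (v - u))"
    using norm_triangle_ineq l by (metis abs_of_pos norm_scaleR)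
  also have "\<dots> \<le> \<sigma> * d + l * (L / 2 * d\<^sup>2)"
    using inexact lipschitz_derivative_remainder_bound[OF convex u v deriv lipschitz] l
    by (intro add_mono mult_left_mono) (auto simp: d_def)
  finally have "residual l v w' x0 \<le> M * (\<sigma> * d + l * (L / 2 * d\<^sup>2))"
    using M by (simp add: residual_def M_def[symmetric])
  also have "\<dots> = \<sigma> * (M * d) + (M * d)\<^sup>2"
    by (simp add: M_def power2_eq_square algebra_simps)
  also have "\<dots> \<le> thetahat \<sigma> \<theta>"
    using thetahat_ge \<sigma>_ge \<sigma>_less displacement M by (simp add: d_def)
  finally show ?thesis .
qed

lemma residual_y_update:
  assumes "residual (lam (Suc n)) (y n) (\<nu> n) (x n) \<le> \<theta>"
  shows "residual (lam (Suc n)) (y (Suc n)) (\<nu> (Suc n)) (x n) \<le> thetahat \<sigma> \<theta>"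
proof (cases "residual (lam (Suc n)) (y n) (\<nu> n) (x n) \<le> thetahat \<sigma> \<theta>")
  case True
  then show ?thesis using update[of n] by simp
next
  case False
  with update[of n] have "\<nu> (Suc n) \<in> normal_cone C (y (Suc n))"
    "norm (lam (Suc n) *\<^sub>R (linearization F F' (y n) (y (Suc n)) + \<nu> (Suc n)) + y (Suc n) - x n)
      \<le> \<sigma> * norm (y (Suc n) - y n)"
    by simp_all
  then show ?thesis
    by (rule residual_inexact_step[OF lam_pos normal_cone_mem _ _ assms])
qed

lemma residual_bound: "residual (lam (Suc n)) (y n) (\<nu> n) (x n) \<le> \<theta>"
proof (induction n)
  case 0
  have "residual (lam 1) (y 0) (\<nu> 0) (x 0) = L / 2 * ((lam 1)\<^sup>2 * norm (F (y 0)))"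
    using initial by (simp add: residual_def power2_eq_square)
  also have "\<dots> \<le> \<theta>"
    using initial L_pos by (simp add: field_simps)
  finally show ?case by simp
next
  case (Suc n)
  define l where "l = lam (Suc n)"
  have res: "residual l (y (Suc n)) (\<nu> (Suc n)) (x n) \<le> thetahat \<sigma> \<theta>"
    unfolding l_def by (rule residual_y_update[OF Suc.IH])
  show ?case
  proof (cases "\<eta> \<le> l * norm (y (Suc n) - x n)")
    case True
    with update[of n] have x': "x (Suc n) = x n - (\<tau> * l) *\<^sub>R (F (y (Suc n)) + \<nu> (Suc n))"
      and l': "lam (Suc (Suc n)) = (1 - \<tau>) * l"
      by (simp_all add: l_def)
    have "residual (lam (Suc (Suc n))) (y (Suc n)) (\<nu> (Suc n)) (x (Suc n))
        = (1 - \<tau>) * residual l (y (Suc n)) (\<nu> (Suc n)) (x n)"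
      unfolding x' l' by (rule residual_extrapolation)
    also have "\<dots> \<le> (1 - \<tau>) * thetahat \<sigma> \<theta>"
      using res \<tau>_bounds by (intro mult_left_mono) auto
    also have "\<dots> \<le> \<theta>"
      using mult_right_mono[of "1 - \<tau>" 1 "thetahat \<sigma> \<theta>"] \<tau>_bounds thetahat_bounds by simp
    finally show ?thesis .
  next
    case False
    with update[of n] have "x (Suc n) = x n" "lam (Suc (Suc n)) = l / (1 - \<tau>)"
      by (simp_all add: l_def)
    moreover have "0 \<le> l" using lam_pos[of n] by (simp add: l_def)
    ultimately show ?thesis
      using residual_stepsize_increase[OF _ _ res] False by simp
  qed
qed

end

theorem proposition4p3:
  fixes C :: "'a::{real_inner, complete_space} set"
    and F :: "'a \<Rightarrow> 'a" and F' :: "'a \<Rightarrow> 'a \<Rightarrow> 'a"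
    and L \<sigma> \<theta> \<eta> :: real
    and x y \<nu> :: "nat \<Rightarrow> 'a" and lam :: "nat \<Rightarrow> real"
  assumes C_ne: "C \<noteq> {}" and C_closed: "closed C" and C_convex: "convex C"
    and F_mono: "\<forall>u\<in>C. \<forall>v\<in>C. inner (F u - F v) (u - v) \<ge> 0"
    and F_deriv: "\<forall>u\<in>C. (F has_derivative F' u) (at u within C)"
    and F'_cont: "continuous_on C (\<lambda>u. Blinfun (F' u))"
    and F'_lip: "\<forall>u\<in>C. \<forall>v\<in>C. onorm (\<lambda>h. F' u h - F' v h) \<le> L * norm (u - v)"
    and L_pos: "L > 0"
    and sol: "\<exists>u\<in>C. - F u \<in> normal_cone C u"
    and \<sigma>_ge: "0 \<le> \<sigma>" and \<sigma>_lt: "\<sigma> < 1/2"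
    and \<theta>_pos: "0 < \<theta>" and \<theta>_lt: "\<theta> < (1 - \<sigma>) * (1 - 2 * \<sigma>)"
    and \<eta>_gt: "\<eta> > 2 * thetahat \<sigma> \<theta> / L"
    and alg: "algorithm2 C F F' L \<sigma> \<theta> \<eta> x y \<nu> lam"
  shows "\<forall>k\<ge>1.
     lam k * L / 2 * norm (lam k *\<^sub>R (F (y (k - 1)) + \<nu> (k - 1)) + y (k - 1) - x (k - 1)) \<le> \<theta> \<and>
     lam k * L / 2 * norm (lam k *\<^sub>R (F (y k) + \<nu> k) + y k - x (k - 1)) \<le> thetahat \<sigma> \<theta>"
proof -
  interpret algorithm2_run C F F' L \<sigma> \<theta> \<eta> x y \<nu> lam
    by unfold_locales (use assms in auto)
  show ?thesis
    unfolding residual_def[symmetric]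
  proof (intro allI impI)
    fix k :: nat
    assume "1 \<le> k"
    then obtain n where k: "k = Suc n" by (cases k) auto
    show "residual (lam k) (y (k - 1)) (\<nu> (k - 1)) (x (k - 1)) \<le> \<theta> \<and>
        residual (lam k) (y k) (\<nu> k) (x (k - 1)) \<le> thetahat \<sigma> \<theta>"
      unfolding k using residual_bound residual_y_update[OF residual_bound] by simp
  qed
qed

end
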